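(* Let $G=(V,E)$ be a finite simple undirected graph, let $M$ be the matching computed by a run of \textsc{MinGreedy} on $G$, and let $M^*$ be a maximum matching of $G$ such that every connected component of $(V,M\cup M^* )$ with an edge is either an edge of $M\cap M^*$ or an $M$-$M^*$-path. Let $w$ be an endpoint of an $M$-$M^*$-path. Then the degree of $w$ in $G$ satisfies $d_G(w)\geq 2$; in particular, $w$ is incident with an edge of $F=E\setminus(M\cup M^* )$.
   Context: \textsc{MinGreedy}: starting with $M=\emptyset$, repeatedly select an arbitrary node $u$ of minimum non-zero current degree and an arbitrary neighbor $v$ of $u$, add $\{u,v\}$ to $M$ and remove all edges incident with $u$ or $v$ from the current graph, until no edges remain. An $M$-$M^*$-path is a connected component of $(V,M\cup M^* )$ that is an alternating path starting and ending with an $M^*$-edge and containing $m\geq1$ edges of $M$ and $m+1$ edges of $M^*$; its endpoints are its two end nodes (which are not covered by $M$). *)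

theory Defs
  imports Main
begin

definition simple_graph :: "'a set \<Rightarrow> 'a set set \<Rightarrow> bool" where
  "simple_graph V E \<longleftrightarrow> finite V \<and>
     (\<forall>e\<in>E. \<exists>u v. e = {u, v} \<and> u \<noteq> v \<and> u \<in> V \<and> v \<in> V)"

definition degree :: "'a set set \<Rightarrow> 'a \<Rightarrow> nat" where
  "degree E x = card {e\<in>E. x \<in> e}"

definition matching :: "'a set set \<Rightarrow> bool" where
  "matching M \<longleftrightarrow> (\<forall>e1\<in>M. \<forall>e2\<in>M. e1 \<noteq> e2 \<longrightarrow> e1 \<inter> e2 = {})"

definition matching_of :: "'a set set \<Rightarrow> 'a set set \<Rightarrow> bool" where
  "matching_of E M \<longleftrightarrow> M \<subseteq> E \<and> matching M"

definition max_matching :: "'a set set \<Rightarrow> 'a set set \<Rightarrow> bool" where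
  "max_matching E M \<longleftrightarrow> matching_of E M \<and>
     (\<forall>M'. matching_of E M' \<longrightarrow> card M' \<le> card M)"

definition min_nonzero_degree :: "'a set set \<Rightarrow> 'a \<Rightarrow> bool" where
  "min_nonzero_degree E u \<longleftrightarrow> degree E u > 0 \<and>
     (\<forall>x. degree E x > 0 \<longrightarrow> degree E u \<le> degree E x)"

inductive mg_reach :: "'a set set \<Rightarrow> 'a set set \<Rightarrow> 'a set set \<Rightarrow> bool" for E where
  start: "mg_reach E E {}"
| step: "\<lbrakk> mg_reach E Ec M; Ec \<noteq> {}; min_nonzero_degree Ec u; {u, v} \<in> Ec \<rbrakk>
         \<Longrightarrow> mg_reach E {e\<in>Ec. u \<notin> e \<and> v \<notin> e} (insert {u, v} M)"

definition mingreedy_result :: "'a set set \<Rightarrow> 'a set set \<Rightarrow> bool" where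
  "mingreedy_result E M \<longleftrightarrow> mg_reach E {} M"

definition path_edges :: "'a list \<Rightarrow> 'a set set" where
  "path_edges ps = {{ps ! i, ps ! Suc i} | i. Suc i < length ps}"

text \<open>An M-M*-path: a connected component of (V, M \<union> Ms) that is an alternating
  path x_0 x_1 ... x_{2m+1} (m \<ge> 1) whose edges alternate M*, M, ..., M*
  (so m edges of M and m+1 edges of M*).  Being a whole component means
  that no other edge of M \<union> Ms touches a vertex of the path.\<close>
definition MMs_path :: "'a set set \<Rightarrow> 'a set set \<Rightarrow> 'a list \<Rightarrow> bool" where
  "MMs_path M Ms ps \<longleftrightarrow>
     distinct ps \<and> even (length ps) \<and> length ps \<ge> 4 \<and>
     (\<forall>i. Suc i < length ps \<longrightarrow>
        (even i \<longrightarrow> {ps ! i, ps ! Suc i} \<in> Ms - M) \<and>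
        (odd i \<longrightarrow> {ps ! i, ps ! Suc i} \<in> M - Ms)) \<and>
     (\<forall>e\<in>M \<union> Ms. e \<inter> set ps \<noteq> {} \<longrightarrow> e \<in> path_edges ps)"

text \<open>Every connected component of (V, M \<union> Ms) with an edge is either a single edge
  of M \<inter> Ms or an M-M*-path; equivalently, every edge of M \<union> Ms is in M \<inter> Ms
  (whose component is then that single edge, both being matchings) or lies on
  an M-M*-path component.\<close>
definition components_ok :: "'a set set \<Rightarrow> 'a set set \<Rightarrow> bool" where
  "components_ok M Ms \<longleftrightarrow>
     (\<forall>e\<in>M \<union> Ms. e \<in> M \<inter> Ms \<or> (\<exists>ps. MMs_path M Ms ps \<and> e \<in> path_edges ps))"

end

theory Submission
  imports Defs
begin

text \<open>Suppose an endpoint w of an M-M*-path had degree at most 1 in G, so its only edge is its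
  M*-edge on the path. As long as MinGreedy has not matched a vertex of the path, all
  path edges survive, so w keeps current degree 1 and every chosen vertex u has current
  degree 1. But an M-edge meeting the path lies on the path, and each of its endpoints
  is an inner vertex that still sees its M*-edge besides the M-edge, i.e. has current
  degree at least 2. Hence MinGreedy never matches a vertex of the path, contradicting
  that the path contains an edge of M. So d(w) \<ge> 2, and the second edge at w lies
  outside M \<union> M*, because the component condition leaves w only its M*-edge.\<close>

lemma simple_graph_finite_edges:
  assumes "simple_graph V E"
  shows "finite E"
proof (rule finite_subset)
  show "E \<subseteq> Pow V" using assms unfolding simple_graph_def by auto
  show "finite (Pow V)" using assms unfolding simple_graph_def by simp
qed

lemma degree_pos: "\<lbrakk>finite E; e \<in> E; x \<in> e\<rbrakk> \<Longrightarrow> 0 < degree E x"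
  unfolding degree_def by (subst card_gt_0_iff) auto

lemma two_le_degree:
  assumes "finite E" "e1 \<in> E" "e2 \<in> E" "e1 \<noteq> e2" "x \<in> e1" "x \<in> e2"
  shows "2 \<le> degree E x"
proof -
  have "card {e1, e2} \<le> degree E x"
    unfolding degree_def using assms by (intro card_mono) auto
  then show ?thesis using assms(4) by simp
qed

lemma degree_mono: "\<lbrakk>finite E; E' \<subseteq> E\<rbrakk> \<Longrightarrow> degree E' x \<le> degree E x"
  unfolding degree_def by (intro card_mono) auto

lemma mg_reach_current_edges:
  "mg_reach E Ec M' \<Longrightarrow> Ec = {e\<in>E. \<forall>f\<in>M'. e \<inter> f = {}}"
  by (induction rule: mg_reach.induct) auto

text \<open>All edges inside S survive while S is untouched, so an endpoint of an M-edge meeting S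
  has current degree at least 2, whereas w keeps current degree at most 1; hence MinGreedy
  never picks such an endpoint.\<close>

lemma mg_reach_avoids:
  assumes "mg_reach E Ec M'" "M' \<subseteq> M" "finite E"
    and "e0 \<in> E" "w \<in> e0" "e0 \<subseteq> S" "degree E w \<le> 1"
    and covered: "\<And>f x. \<lbrakk>f \<in> M; f \<inter> S \<noteq> {}; x \<in> f\<rbrakk> \<Longrightarrow> \<exists>g\<in>E. x \<in> g \<and> g \<subseteq> S \<and> g \<noteq> f"
  shows "\<forall>f\<in>M'. f \<inter> S = {}"
  using assms(1,2)
proof (induction rule: mg_reach.induct)
  case start
  then show ?case by simp
next
  case (step Ec M' u v)
  then have untouched: "\<forall>f\<in>M'. f \<inter> S = {}" by simp
  have Ec: "Ec = {e\<in>E. \<forall>f\<in>M'. e \<inter> f = {}}"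
    using step.hyps(1) by (rule mg_reach_current_edges)
  have inside_Ec: "g \<in> Ec" if "g \<in> E" "g \<subseteq> S" for g
    using that untouched Ec by blast
  have "finite Ec" using Ec \<open>finite E\<close> by simp
  have "{u, v} \<inter> S = {}"
  proof (rule ccontr)
    assume "{u, v} \<inter> S \<noteq> {}"
    moreover have "{u, v} \<in> M" using step.prems by simp
    ultimately obtain g where g: "g \<in> E" "u \<in> g" "g \<subseteq> S" "g \<noteq> {u, v}"
      using covered[of "{u, v}" u] by blast
    have "2 \<le> degree Ec u"
      using g by (intro two_le_degree[OF \<open>finite Ec\<close> inside_Ec[OF g(1,3)] step.hyps(4)]) auto
    moreover have "e0 \<in> Ec" using inside_Ec assms(4,6) by blast
    then have "0 < degree Ec w" using degree_pos[OF \<open>finite Ec\<close> _ assms(5)] by blast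
    then have "degree Ec u \<le> degree Ec w"
      using step.hyps(3) unfolding min_nonzero_degree_def by blast
    moreover have "degree Ec w \<le> 1"
      using degree_mono[OF \<open>finite E\<close>, of Ec w] Ec assms(7) by auto
    ultimately show False by simp
  qed
  then show ?case using untouched by simp
qed

lemma MMs_path_component:
  "\<lbrakk>MMs_path M Ms ps; e \<in> M \<union> Ms; e \<inter> set ps \<noteq> {}\<rbrakk> \<Longrightarrow> e \<in> path_edges ps"
  unfolding MMs_path_def by blast

lemma MMs_path_edge:
  assumes "MMs_path M Ms ps" "Suc i < length ps"
  shows "even i \<Longrightarrow> {ps ! i, ps ! Suc i} \<in> Ms - M"
    and "odd i \<Longrightarrow> {ps ! i, ps ! Suc i} \<in> M - Ms"
  using assms unfolding MMs_path_def by blast+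

lemma MMs_path_M_edge_covered:
  assumes P: "MMs_path M Ms ps" and "f \<in> M" "f \<inter> set ps \<noteq> {}" "x \<in> f"
  shows "\<exists>g\<in>Ms. x \<in> g \<and> g \<subseteq> set ps \<and> g \<noteq> f"
proof -
  have "f \<in> path_edges ps" using MMs_path_component[OF P] assms(2,3) by blast
  then obtain i where i: "f = {ps ! i, ps ! Suc i}" "Suc i < length ps"
    unfolding path_edges_def by blast
  have "odd i" using MMs_path_edge(1)[OF P i(2)] \<open>f \<in> M\<close> i(1) by auto
  have "even (length ps)" using P unfolding MMs_path_def by simp
  with \<open>odd i\<close> have "Suc (Suc i) \<noteq> length ps" by (metis even_Suc_Suc_iff)
  with i(2) have "Suc (Suc i) < length ps" by linarith
  have before: "{ps ! (i - 1), ps ! i} \<in> Ms - M"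
    using MMs_path_edge(1)[OF P, of "i - 1"] \<open>odd i\<close> odd_pos[OF \<open>odd i\<close>] i(2) by simp
  have after: "{ps ! Suc i, ps ! Suc (Suc i)} \<in> Ms - M"
    using MMs_path_edge(1)[OF P, of "Suc i"] \<open>odd i\<close> \<open>Suc (Suc i) < length ps\<close> by simp
  have "x = ps ! i \<or> x = ps ! Suc i" using \<open>x \<in> f\<close> i(1) by simp
  then show ?thesis
  proof
    assume "x = ps ! i"
    then show ?thesis using before \<open>f \<in> M\<close> i(2) by (intro bexI[of _ "{ps ! (i - 1), ps ! i}"]) auto
  next
    assume "x = ps ! Suc i"
    then show ?thesis using after \<open>f \<in> M\<close> \<open>Suc (Suc i) < length ps\<close>
      by (intro bexI[of _ "{ps ! Suc i, ps ! Suc (Suc i)}"]) auto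
  qed
qed

lemma path_edges_rev: "path_edges (rev ps) = path_edges ps"
proof -
  have "path_edges (rev xs) \<subseteq> path_edges xs" for xs :: "'b list"
  proof
    fix e assume "e \<in> path_edges (rev xs)"
    then obtain i where i: "e = {rev xs ! i, rev xs ! Suc i}" "Suc i < length xs"
      unfolding path_edges_def by auto
    let ?j = "length xs - Suc (Suc i)"
    have "e = {xs ! ?j, xs ! Suc ?j}" "Suc ?j < length xs"
      using i by (auto simp: rev_nth Suc_diff_Suc)
    then show "e \<in> path_edges xs" unfolding path_edges_def by blast
  qed
  from this[of ps] this[of "rev ps"] show ?thesis by simp
qed

lemma MMs_path_rev:
  assumes P: "MMs_path M Ms ps"
  shows "MMs_path M Ms (rev ps)"
proof -
  have alternating: "(even i \<longrightarrow> {rev ps ! i, rev ps ! Suc i} \<in> Ms - M) \<and>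
      (odd i \<longrightarrow> {rev ps ! i, rev ps ! Suc i} \<in> M - Ms)" if "Suc i < length ps" for i
  proof -
    let ?j = "length ps - Suc (Suc i)"
    have "even (length ps)" using P unfolding MMs_path_def by simp
    then have "even ?j \<longleftrightarrow> even i" using that by simp
    moreover have "{rev ps ! i, rev ps ! Suc i} = {ps ! ?j, ps ! Suc ?j}" "Suc ?j < length ps"
      using that by (auto simp: rev_nth Suc_diff_Suc)
    ultimately show ?thesis using MMs_path_edge[OF P] by metis
  qed
  show ?thesis
    using P alternating unfolding MMs_path_def path_edges_rev by simp
qed

lemma MMs_path_hd_edge:
  assumes P: "MMs_path M Ms ps"
  shows "\<exists>e0\<in>Ms. hd ps \<in> e0 \<and> e0 \<subseteq> set ps \<and> (\<forall>e\<in>M \<union> Ms. hd ps \<in> e \<longrightarrow> e = e0)"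
proof (intro bexI conjI ballI impI)
  have "distinct ps" "1 < length ps" using P unfolding MMs_path_def by auto
  then have hd: "hd ps = ps ! 0" by (cases ps) auto
  then show "hd ps \<in> {ps ! 0, ps ! 1}" by simp
  show "{ps ! 0, ps ! 1} \<subseteq> set ps" using \<open>1 < length ps\<close> by (auto intro!: nth_mem)
  show "{ps ! 0, ps ! 1} \<in> Ms" using MMs_path_edge(1)[OF P, of 0] \<open>1 < length ps\<close> by simp
  fix e assume "e \<in> M \<union> Ms" "hd ps \<in> e"
  moreover have "hd ps \<in> set ps" using hd \<open>1 < length ps\<close> by (auto intro!: nth_mem)
  ultimately have "e \<in> path_edges ps" using MMs_path_component[OF P] by blast
  then obtain i where i: "e = {ps ! i, ps ! Suc i}" "Suc i < length ps"
    unfolding path_edges_def by blast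
  moreover have "ps ! 0 = ps ! i \<or> ps ! 0 = ps ! Suc i" using \<open>hd ps \<in> e\<close> hd i(1) by simp
  ultimately have "i = 0" using \<open>distinct ps\<close>
    by (metis Suc_lessD nat.distinct(1) nth_eq_iff_index_eq zero_less_Suc order.strict_trans)
  then show "e = {ps ! 0, ps ! 1}" using i by simp
qed

lemma MMs_path_end_edge:
  assumes "MMs_path M Ms ps" "w = hd ps \<or> w = last ps"
  shows "\<exists>e0\<in>Ms. w \<in> e0 \<and> e0 \<subseteq> set ps \<and> (\<forall>e\<in>M \<union> Ms. w \<in> e \<longrightarrow> e = e0)"
  using assms MMs_path_hd_edge[OF assms(1)] MMs_path_hd_edge[OF MMs_path_rev[OF assms(1)]]
  by (auto simp: hd_rev)

theorem lemma2:
  fixes V :: "'a set" and E M Ms :: "'a set set" and ps :: "'a list" and w :: 'a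
  assumes "simple_graph V E"
    and "mingreedy_result E M"
    and "max_matching E Ms"
    and "components_ok M Ms"
    and "MMs_path M Ms ps"
    and "w = hd ps \<or> w = last ps"
  shows "degree E w \<ge> 2 \<and> (\<exists>e\<in>E - (M \<union> Ms). w \<in> e)"
proof -
  have "finite E" using assms(1) by (rule simple_graph_finite_edges)
  have "Ms \<subseteq> E" using assms(3) unfolding max_matching_def matching_of_def by blast
  obtain e0 where e0: "e0 \<in> Ms" "w \<in> e0" "e0 \<subseteq> set ps" "\<forall>e\<in>M \<union> Ms. w \<in> e \<longrightarrow> e = e0"
    using MMs_path_end_edge[OF assms(5,6)] by blast
  have deg: "2 \<le> degree E w"
  proof (rule ccontr)
    assume "\<not> 2 \<le> degree E w"
    then have "degree E w \<le> 1" by simp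
    moreover have "\<exists>g\<in>E. x \<in> g \<and> g \<subseteq> set ps \<and> g \<noteq> f"
      if "f \<in> M" "f \<inter> set ps \<noteq> {}" "x \<in> f" for f x
      using MMs_path_M_edge_covered[OF assms(5) that] \<open>Ms \<subseteq> E\<close> by blast
    moreover have "e0 \<in> E" using e0(1) \<open>Ms \<subseteq> E\<close> by blast
    moreover have "mg_reach E {} M" using assms(2) unfolding mingreedy_result_def .
    ultimately have untouched: "\<forall>f\<in>M. f \<inter> set ps = {}"
      using mg_reach_avoids[of E "{}" M M, OF _ order_refl \<open>finite E\<close> _ e0(2,3)] by blast
    have "Suc 1 < length ps" using assms(5) unfolding MMs_path_def by simp
    then have "{ps ! 1, ps ! Suc 1} \<in> M" "ps ! 1 \<in> set ps"
      using MMs_path_edge(2)[OF assms(5), of 1] by auto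
    then show False using untouched by auto
  qed
  then have "\<not> {e\<in>E. w \<in> e} \<subseteq> {e0}"
    using card_mono[of "{e0}" "{e\<in>E. w \<in> e}"] unfolding degree_def by auto
  then obtain e where "e \<in> E" "w \<in> e" "e \<noteq> e0" by blast
  then show ?thesis using deg e0(4) by blast
qed

end
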